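(* Let $m=2^k$ with $k\ge 2$, $\omega=e^{2\pi i/m}$, $F_m=\frac{1}{\sqrt m}(\omega^{jk})_{j,k=0}^{m-1}$, and $\alpha\in\mathbb{C}$. For $j\ge 0$ let $B_j=\frac{1}{\sqrt{1+|\alpha|^{2j}}}\begin{pmatrix}1&\alpha^j\\ \overline{\alpha}^j&-1\end{pmatrix}$. Let $J$ be the $m\times m$ permutation matrix with $J\ket{i}=\ket{2i}$ and $J\ket{m-1-i}=\ket{2i+1}$ for $0\le i<m/2$ (basis $\ket{0},\dots,\ket{m-1}$). Define $A=J^\dagger\left(B_{m/4}\otimes B_{m/8}\otimes\cdots\otimes B_2\otimes B_1\otimes B_0\right)JF_m^\dagger$. Let $\ket{\Psi}=\frac{1}{\sqrt\kappa}(1,\alpha,\alpha^2,\dots,\alpha^{m/2-1},\alpha^{m/2-1},\dots,\alpha,1)^T\in\mathbb{C}^m$ with $\kappa=2m(1+|\alpha|^2+|\alpha|^4+\cdots+|\alpha|^{m-2})$, and write $\ket{\Psi}=(v_1,\dots,v_m)^T$. Then $A$ is unitary and its first row equals $(\sqrt m\,v_1,\dots,\sqrt m\,v_m)F_m^\dagger$.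
   Context: The Kronecker product $B_{m/4}\otimes\cdots\otimes B_1\otimes B_0$ has $k$ factors $B_{2^{k-2}},\dots,B_2,B_1,B_0$, the leftmost factor acting on the most significant binary digit of the index $0,\dots,m-1$. *)

theory Defs
  imports Complex_Main "Jordan_Normal_Form.Matrix"
begin

definition adj :: "complex mat \<Rightarrow> complex mat" where
  "adj A = mat (dim_col A) (dim_row A) (\<lambda>(i,j). cnj (A $$ (j,i)))"

definition unitary_mat :: "complex mat \<Rightarrow> bool" where
  "unitary_mat U \<longleftrightarrow> dim_row U = dim_col U \<and>
     adj U * U = 1\<^sub>m (dim_row U) \<and> U * adj U = 1\<^sub>m (dim_row U)"

text \<open>Kronecker product (standard: the left factor acts on the more significant index digit).\<close>
definition kron :: "complex mat \<Rightarrow> complex mat \<Rightarrow> complex mat" where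
  "kron A B = mat (dim_row A * dim_row B) (dim_col A * dim_col B)
     (\<lambda>(i,j). A $$ (i div dim_row B, j div dim_col B) * B $$ (i mod dim_row B, j mod dim_col B))"

definition kron_list :: "complex mat list \<Rightarrow> complex mat" where
  "kron_list Ms = foldr kron Ms (1\<^sub>m 1)"

definition Bmat :: "complex \<Rightarrow> nat \<Rightarrow> complex mat" where
  "Bmat \<alpha> j = complex_of_real (1 / sqrt (1 + cmod \<alpha> ^ (2*j))) \<cdot>\<^sub>m
     mat 2 2 (\<lambda>(r,c). if r = 0 \<and> c = 0 then 1 else if r = 0 \<and> c = 1 then \<alpha> ^ j
                      else if r = 1 \<and> c = 0 then cnj \<alpha> ^ j else -1)"

definition Bkron :: "complex \<Rightarrow> nat \<Rightarrow> complex mat" where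
  "Bkron \<alpha> k = kron_list (map (\<lambda>t. Bmat \<alpha> (2 ^ t)) (rev [0..<k-1]) @ [Bmat \<alpha> 0])"

definition fourier :: "nat \<Rightarrow> complex mat" where
  "fourier m = mat m m (\<lambda>(j,l). complex_of_real (1 / sqrt (real m)) *
      exp (2 * complex_of_real pi * \<i> / of_nat m) ^ (j * l))"

definition Jidx :: "nat \<Rightarrow> nat \<Rightarrow> nat" where
  "Jidx m c = (if c < m div 2 then 2 * c else 2 * (m - 1 - c) + 1)"

definition Jmat :: "nat \<Rightarrow> complex mat" where
  "Jmat m = mat m m (\<lambda>(r,c). if r = Jidx m c then 1 else 0)"

definition Amat :: "complex \<Rightarrow> nat \<Rightarrow> complex mat" where
  "Amat \<alpha> k = adj (Jmat (2^k)) * Bkron \<alpha> k * Jmat (2^k) * adj (fourier (2^k))"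

definition kappa :: "complex \<Rightarrow> nat \<Rightarrow> real" where
  "kappa \<alpha> m = 2 * real m * (\<Sum>t<m div 2. cmod \<alpha> ^ (2*t))"

definition Psi :: "complex \<Rightarrow> nat \<Rightarrow> complex vec" where
  "Psi \<alpha> m = vec m (\<lambda>l. complex_of_real (1 / sqrt (kappa \<alpha> m)) *
      (if l < m div 2 then \<alpha> ^ l else \<alpha> ^ (m - 1 - l)))"

end

theory Submission
  imports Defs "Jordan_Normal_Form.Determinant"
begin

(* The first row of B_0 is (1, 1)/sqrt 2 and that of B_(2^t) is (1, alpha^(2^t)) up to normalisation, so,
   reading the column index j in binary, the first row of B_(m/4) (x) ... (x) B_0 has entry alpha^(j div 2)
   times the product of the normalisers.  As (1 + x)(1 + x^2)(1 + x^4)... = 1 + x + ... + x^(m/2-1), with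
   x = |alpha|^2, that product is sqrt m / sqrt kappa.  Conjugation by the permutation J fixes the index 0
   and moves column c to a column whose index halved is min c (m-1-c), which turns alpha^(j div 2) into
   the palindromic entries of Psi.  Unitarity holds because J, every B_j and F_m are unitary and
   Kronecker products of unitary matrices are unitary. *)

lemma adj_carrier [simp]: "dim_row (adj A) = dim_col A" "dim_col (adj A) = dim_row A"
  by (auto simp: adj_def)

lemma adj_carrier_mat: "A \<in> carrier_mat n m \<Longrightarrow> adj A \<in> carrier_mat m n"
  by auto

lemma adj_index [simp]: "i < dim_col A \<Longrightarrow> j < dim_row A \<Longrightarrow> adj A $$ (i, j) = cnj (A $$ (j, i))"
  by (auto simp: adj_def)

lemma adj_adj [simp]: "adj (adj A) = A"
  by (rule eq_matI) auto

lemma adj_mult: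
  assumes "A \<in> carrier_mat n m" "B \<in> carrier_mat m p"
  shows "adj (A * B) = adj B * adj A"
  using assms by (intro eq_matI) (auto simp: scalar_prod_def mult.commute intro!: sum.cong)

lemma unitary_matI:
  assumes U: "U \<in> carrier_mat n n" and inv: "adj U * U = 1\<^sub>m n"
  shows "unitary_mat U"
proof -
  have "U * adj U = 1\<^sub>m n"
    by (rule mat_mult_left_right_inverse[OF _ _ inv]) (use U in auto)
  with U inv show ?thesis
    unfolding unitary_mat_def by auto
qed

lemma unitary_mat_one: "unitary_mat (1\<^sub>m n)"
  by (rule unitary_matI[of _ n]) (auto intro: eq_matI)

lemma unitary_mat_adj: "unitary_mat U \<Longrightarrow> unitary_mat (adj U)"
  unfolding unitary_mat_def by auto

lemma unitary_mat_mult: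
  assumes "unitary_mat A" "unitary_mat B" and A: "A \<in> carrier_mat n n" and B: "B \<in> carrier_mat n n"
  shows "unitary_mat (A * B)"
proof (rule unitary_matI[of _ n])
  show "A * B \<in> carrier_mat n n"
    using A B by auto
  have "adj A \<in> carrier_mat n n" "adj B \<in> carrier_mat n n"
    using A B by (simp_all add: adj_carrier_mat)
  then have "adj (A * B) * (A * B) = adj B * (adj A * A) * B"
    using A B by (simp add: adj_mult[OF A B] assoc_mult_mat[of _ n n _ n _ n])
  also have "\<dots> = 1\<^sub>m n"
    using assms unfolding unitary_mat_def by simp
  finally show "adj (A * B) * (A * B) = 1\<^sub>m n" .
qed

lemma sum_mult_interval_nat:
  "(\<Sum>r\<in>{0..<a * b}. f r) = (\<Sum>p\<in>{0..<a}. \<Sum>q\<in>{0..<b}. f (p * b + q :: nat))"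
proof (induction a)
  case (Suc a)
  have "(\<Sum>r\<in>{0..<Suc a * b}. f r) = (\<Sum>r\<in>{0..<a * b}. f r) + (\<Sum>r\<in>{a * b..<a * b + b}. f r)"
    by (simp add: sum.atLeastLessThan_concat add.commute)
  also have "(\<Sum>r\<in>{a * b..<a * b + b}. f r) = (\<Sum>q\<in>{0..<b}. f (a * b + q))"
    using sum.shift_bounds_nat_ivl[of f 0 "a * b" b] by (simp add: add.commute)
  finally show ?case
    using Suc by simp
qed simp

lemma kron_carrier [simp]:
  "dim_row (kron A B) = dim_row A * dim_row B" "dim_col (kron A B) = dim_col A * dim_col B"
  by (auto simp: kron_def)

lemma kron_index [simp]:
  "i < dim_row A * dim_row B \<Longrightarrow> j < dim_col A * dim_col B \<Longrightarrow>
   kron A B $$ (i, j) = A $$ (i div dim_row B, j div dim_col B) * B $$ (i mod dim_row B, j mod dim_col B)"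
  by (auto simp: kron_def)

lemma kron_mult:
  assumes A: "A \<in> carrier_mat ra ca" and C: "C \<in> carrier_mat ca cc"
    and B: "B \<in> carrier_mat rb cb" and D: "D \<in> carrier_mat cb cd"
    and pos: "rb > 0" "cb > 0" "cd > 0"
  shows "kron A B * kron C D = kron (A * C) (B * D)"
proof (rule eq_matI)
  fix i j
  assume "i < dim_row (kron (A * C) (B * D))" "j < dim_col (kron (A * C) (B * D))"
  then have i: "i < ra * rb" and j: "j < cc * cd"
    using A B C D by auto
  then have "i div rb < ra" "j div cd < cc" "i mod rb < rb" "j mod cd < cd"
    using pos by (auto simp: less_mult_imp_div_less)
  moreover have "(kron A B * kron C D) $$ (i, j) = (\<Sum>r\<in>{0..<ca * cb}.
      (A $$ (i div rb, r div cb) * B $$ (i mod rb, r mod cb)) * (C $$ (r div cb, j div cd) * D $$ (r mod cb, j mod cd)))"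
    using i j A B C D by (auto simp: scalar_prod_def intro!: sum.cong)
  moreover have "\<dots> = (\<Sum>p\<in>{0..<ca}. A $$ (i div rb, p) * C $$ (p, j div cd)) *
      (\<Sum>q\<in>{0..<cb}. B $$ (i mod rb, q) * D $$ (q, j mod cd))"
    unfolding sum_mult_interval_nat sum_product using pos by (intro sum.cong refl) (simp add: mult_ac)
  ultimately show "(kron A B * kron C D) $$ (i, j) = kron (A * C) (B * D) $$ (i, j)"
    using i j A B C D by (auto simp: scalar_prod_def)
qed (use A B C D in auto)

lemma adj_kron: "adj (kron A B) = kron (adj A) (adj B)"
proof (rule eq_matI)
  fix i j
  assume "i < dim_row (kron (adj A) (adj B))" "j < dim_col (kron (adj A) (adj B))"
  then have i: "i < dim_col A * dim_col B" and j: "j < dim_row A * dim_row B"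
    by auto
  then have "dim_col B > 0" "dim_row B > 0"
    by (auto intro: ccontr)
  with i j show "adj (kron A B) $$ (i, j) = kron (adj A) (adj B) $$ (i, j)"
    by (auto simp: less_mult_imp_div_less)
qed auto

lemma kron_one: "n > 0 \<Longrightarrow> kron (1\<^sub>m a) (1\<^sub>m n) = 1\<^sub>m (a * n)"
  by (rule eq_matI) (auto simp: less_mult_imp_div_less, metis div_mult_mod_eq)

lemma unitary_mat_kron:
  assumes "unitary_mat A" "unitary_mat B" "A \<in> carrier_mat a a" "B \<in> carrier_mat b b" "b > 0"
  shows "unitary_mat (kron A B)"
proof (rule unitary_matI[of _ "a * b"])
  show "kron A B \<in> carrier_mat (a * b) (a * b)"
    using assms by auto
  have "adj A * A = 1\<^sub>m a" "adj B * B = 1\<^sub>m b"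
    using assms unfolding unitary_mat_def by auto
  then show "adj (kron A B) * kron A B = 1\<^sub>m (a * b)"
    unfolding adj_kron using assms by (subst kron_mult[of _ a a _ a _ b b _ b]) (auto simp: kron_one)
qed

lemma fourier_carrier [simp]:
  "fourier m \<in> carrier_mat m m" "dim_row (fourier m) = m" "dim_col (fourier m) = m"
  unfolding fourier_def by auto

lemma fourier_index:
  "j < m \<Longrightarrow> l < m \<Longrightarrow>
   fourier m $$ (j, l) = complex_of_real (1 / sqrt (real m)) * cis (2 * pi / m) ^ (j * l)"
  by (simp add: fourier_def cis_conv_exp field_simps)

lemma cis_root_unity_power_inj:
  fixes i j m :: nat
  assumes "i < m" "j < m" "cis (2 * pi / m) ^ i = cis (2 * pi / m) ^ j"
  shows "i = j"
proof -
  have "inj_on (\<lambda>k. cis (2 * pi * real k / real m)) {..<m}"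
    using bij_betw_roots_unity[of m] assms(1) by (simp add: bij_betw_def)
  moreover have "cis (2 * pi * real i / real m) = cis (2 * pi * real j / real m)"
    using assms(3) by (simp add: DeMoivre mult_ac)
  ultimately show ?thesis
    using assms(1,2) by (auto dest: inj_onD)
qed

lemma roots_unity_orthogonality:
  fixes i j m :: nat
  defines "\<omega> \<equiv> cis (2 * pi / m)"
  assumes i: "i < m" and j: "j < m"
  shows "(\<Sum>l<m. (cnj (\<omega> ^ i) * \<omega> ^ j) ^ l) = (if i = j then of_nat m else 0)"
proof -
  define z where "z = cnj (\<omega> ^ i) * \<omega> ^ j"
  have unit: "cnj (\<omega> ^ i) * \<omega> ^ i = 1"
    by (simp add: \<omega>_def DeMoivre cis_cnj cis_mult)
  show ?thesis
  proof (cases "i = j")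
    case True
    then show ?thesis
      using unit by simp
  next
    case False
    have "z ^ m = cnj ((\<omega> ^ m) ^ i) * (\<omega> ^ m) ^ j"
      by (simp only: z_def power_mult_distrib complex_cnj_power power_mult[symmetric] mult.commute)
    also have "\<dots> = 1"
      using i by (simp add: \<omega>_def DeMoivre)
    finally have "z ^ m = 1" .
    moreover have "z \<noteq> 1"
    proof
      assume "z = 1"
      then have "\<omega> ^ i = \<omega> ^ j"
        using unit unfolding z_def by (metis mult.assoc mult.commute mult_1_right)
      with i j False show False
        using cis_root_unity_power_inj unfolding \<omega>_def by blast
    qed
    ultimately show ?thesis
      using False by (simp add: geometric_sum z_def)
  qed
qed

lemma unitary_mat_fourier:
  assumes m: "m > 0"
  shows "unitary_mat (fourier m)"
proof (rule unitary_matI[of _ m])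
  define \<omega> where "\<omega> = cis (2 * pi / m)"
  define s where "s = complex_of_real (1 / sqrt (real m))"
  have "cnj s * s = complex_of_real (1 / sqrt (real m) * (1 / sqrt (real m)))"
    by (simp only: s_def complex_cnj_complex_of_real of_real_mult)
  also have "1 / sqrt (real m) * (1 / sqrt (real m)) = 1 / real m"
    using m by simp
  finally have s: "cnj s * s * of_nat m = 1"
    using m by simp
  show "adj (fourier m) * fourier m = 1\<^sub>m m"
  proof (rule eq_matI)
    fix i j
    assume "i < dim_row (1\<^sub>m m :: complex mat)" "j < dim_col (1\<^sub>m m :: complex mat)"
    then have i: "i < m" and j: "j < m"
      by auto
    have "cnj (fourier m $$ (l, i)) * fourier m $$ (l, j) = cnj s * s * (cnj (\<omega> ^ i) * \<omega> ^ j) ^ l"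
      if "l < m" for l
      unfolding fourier_index[OF that i] fourier_index[OF that j] s_def[symmetric] \<omega>_def[symmetric]
      by (simp add: power_mult mult.commute[of l] power_mult_distrib mult_ac)
    then have "(adj (fourier m) * fourier m) $$ (i, j) = cnj s * s * (\<Sum>l<m. (cnj (\<omega> ^ i) * \<omega> ^ j) ^ l)"
      using i j by (simp add: scalar_prod_def sum_distrib_left atLeast0LessThan)
    then show "(adj (fourier m) * fourier m) $$ (i, j) = 1\<^sub>m m $$ (i, j)"
      using roots_unity_orthogonality[OF i j] i j s unfolding \<omega>_def by simp
  qed auto
qed simp

definition perm_mat :: "nat \<Rightarrow> (nat \<Rightarrow> nat) \<Rightarrow> complex mat" where
  "perm_mat m f = mat m m (\<lambda>(r, c). if r = f c then 1 else 0)"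

lemma perm_mat_carrier [simp]:
  "perm_mat m f \<in> carrier_mat m m" "dim_row (perm_mat m f) = m" "dim_col (perm_mat m f) = m"
  by (auto simp: perm_mat_def)

lemma mult_perm_mat_index:
  assumes "f ` {..<m} \<subseteq> {..<m}" "dim_col A = m" "i < dim_row A" "j < m"
  shows "(A * perm_mat m f) $$ (i, j) = A $$ (i, f j)"
proof -
  have "(A * perm_mat m f) $$ (i, j) = (\<Sum>r\<in>{0..<m}. A $$ (i, r) * (if r = f j then 1 else 0))"
    using assms by (simp add: scalar_prod_def perm_mat_def)
  also have "\<dots> = (\<Sum>r\<in>{0..<m}. if r = f j then A $$ (i, r) else 0)"
    by (intro sum.cong) auto
  finally show ?thesis
    using assms by auto
qed

lemma adj_perm_mat_mult_index:
  assumes "f ` {..<m} \<subseteq> {..<m}" "dim_row A = m" "i < m" "j < dim_col A"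
  shows "(adj (perm_mat m f) * A) $$ (i, j) = A $$ (f i, j)"
proof -
  have "(adj (perm_mat m f) * A) $$ (i, j) = (\<Sum>r\<in>{0..<m}. cnj (if r = f i then 1 else 0) * A $$ (r, j))"
    using assms by (simp add: scalar_prod_def perm_mat_def)
  also have "\<dots> = (\<Sum>r\<in>{0..<m}. if r = f i then A $$ (r, j) else 0)"
    by (intro sum.cong) auto
  finally show ?thesis
    using assms by auto
qed

lemma perm_mat_conj_index:
  assumes f: "f ` {..<m} \<subseteq> {..<m}" and M: "M \<in> carrier_mat m m" and "i < m" "j < m"
  shows "(adj (perm_mat m f) * M * perm_mat m f) $$ (i, j) = M $$ (f i, f j)"
proof -
  have "(adj (perm_mat m f) * M * perm_mat m f) $$ (i, j) = (adj (perm_mat m f) * M) $$ (i, f j)"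
    using assms by (intro mult_perm_mat_index) auto
  also have "\<dots> = M $$ (f i, f j)"
    using assms by (intro adj_perm_mat_mult_index) auto
  finally show ?thesis .
qed

lemma unitary_mat_perm_mat:
  assumes f: "f ` {..<m} \<subseteq> {..<m}" and inj: "inj_on f {..<m}"
  shows "unitary_mat (perm_mat m f)"
proof (rule unitary_matI[of _ m])
  show "adj (perm_mat m f) * perm_mat m f = 1\<^sub>m m"
  proof (rule eq_matI)
    fix i j
    assume "i < dim_row (1\<^sub>m m :: complex mat)" "j < dim_col (1\<^sub>m m :: complex mat)"
    then have i: "i < m" and j: "j < m"
      by auto
    have "(adj (perm_mat m f) * perm_mat m f) $$ (i, j) = perm_mat m f $$ (f i, j)"
      using f i j by (intro adj_perm_mat_mult_index) auto
    also have "\<dots> = 1\<^sub>m m $$ (i, j)"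
      using f inj i j by (auto simp: perm_mat_def inj_on_eq_iff image_subset_iff)
    finally show "(adj (perm_mat m f) * perm_mat m f) $$ (i, j) = 1\<^sub>m m $$ (i, j)" .
  qed auto
qed simp

lemma Jmat_eq_perm_mat: "Jmat m = perm_mat m (Jidx m)"
  by (simp add: Jmat_def perm_mat_def)

lemma Jidx_less: "even m \<Longrightarrow> c < m \<Longrightarrow> Jidx m c < m"
  by (auto simp: Jidx_def elim!: evenE)

lemma inj_on_Jidx: "inj_on (Jidx m) {..<m}"
  by (rule inj_onI) (auto simp: Jidx_def split: if_splits, presburger+)

lemma Jidx_div_2: "Jidx m c div 2 = (if c < m div 2 then c else m - 1 - c)"
  by (auto simp: Jidx_def)

lemma Bmat_carrier [simp]: "Bmat \<alpha> j \<in> carrier_mat 2 2" "dim_row (Bmat \<alpha> j) = 2" "dim_col (Bmat \<alpha> j) = 2"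
  by (auto simp: Bmat_def)

lemma Bmat_index:
  "r < 2 \<Longrightarrow> q < 2 \<Longrightarrow> Bmat \<alpha> j $$ (r, q) = complex_of_real (1 / sqrt (1 + cmod \<alpha> ^ (2 * j))) *
   (if r = 0 \<and> q = 0 then 1 else if r = 0 \<and> q = 1 then \<alpha> ^ j else if r = 1 \<and> q = 0 then cnj \<alpha> ^ j else -1)"
  by (auto simp: Bmat_def)

lemma Bmat_first_row:
  "q < 2 \<Longrightarrow> Bmat \<alpha> j $$ (0, q) = complex_of_real (1 / sqrt (1 + cmod \<alpha> ^ (2 * j))) * \<alpha> ^ (j * q)"
  by (auto simp: Bmat_index less_2_cases_iff)

lemma unitary_mat_Bmat: "unitary_mat (Bmat \<alpha> j)"
proof (rule unitary_matI[of _ 2])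
  define c where "c = complex_of_real (1 / sqrt (1 + cmod \<alpha> ^ (2 * j)))"
  define a where "a = \<alpha> ^ j"
  define t where "t = 1 + cmod a ^ 2"
  have "t > 0"
    by (simp add: t_def add_pos_nonneg)
  have "cmod \<alpha> ^ (2 * j) = cmod a ^ 2"
    by (simp add: a_def norm_power power_mult[symmetric] mult.commute)
  then have "cnj c * c = complex_of_real (1 / sqrt t * (1 / sqrt t))"
    by (simp only: c_def t_def complex_cnj_complex_of_real of_real_mult)
  also have "1 / sqrt t * (1 / sqrt t) = 1 / t"
    using \<open>t > 0\<close> by simp
  also have "1 + cnj a * a = complex_of_real t"
    using complex_norm_square[of a] by (simp add: t_def mult.commute)
  ultimately have norm: "cnj c * c * (1 + cnj a * a) = 1"
    using \<open>t > 0\<close> by (simp flip: of_real_mult)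
  have B: "Bmat \<alpha> j $$ (r, q) = c *
      (if r = 0 \<and> q = 0 then 1 else if r = 0 \<and> q = 1 then a else if r = 1 \<and> q = 0 then cnj a else -1)"
    if "r < 2" "q < 2" for r q
    using that by (simp add: Bmat_index c_def a_def)
  show "adj (Bmat \<alpha> j) * Bmat \<alpha> j = 1\<^sub>m 2"
  proof (rule eq_matI)
    fix p q
    assume "p < dim_row (1\<^sub>m 2 :: complex mat)" "q < dim_col (1\<^sub>m 2 :: complex mat)"
    then have "p < 2" "q < 2"
      by auto
    with norm show "(adj (Bmat \<alpha> j) * Bmat \<alpha> j) $$ (p, q) = 1\<^sub>m 2 $$ (p, q)"
      by (auto simp: scalar_prod_def numeral_2_eq_2 B less_Suc_eq algebra_simps)
  qed auto
qed simp

lemma Bkron_Suc_0: "Bkron \<alpha> (Suc 0) = kron (Bmat \<alpha> 0) (1\<^sub>m 1)"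
  by (simp add: Bkron_def kron_list_def)

lemma Bkron_Suc_Suc: "Bkron \<alpha> (Suc (Suc n)) = kron (Bmat \<alpha> (2 ^ n)) (Bkron \<alpha> (Suc n))"
  by (simp add: Bkron_def kron_list_def)

lemma Bkron_Suc_carrier: "Bkron \<alpha> (Suc n) \<in> carrier_mat (2 ^ Suc n) (2 ^ Suc n)"
  by (induction n) (auto simp: Bkron_Suc_0 Bkron_Suc_Suc)

lemma Bkron_carrier: "0 < k \<Longrightarrow> Bkron \<alpha> k \<in> carrier_mat (2 ^ k) (2 ^ k)"
  using Bkron_Suc_carrier gr0_implies_Suc by blast

lemma unitary_mat_Bkron: "0 < k \<Longrightarrow> unitary_mat (Bkron \<alpha> k)"
proof -
  have "unitary_mat (Bkron \<alpha> (Suc n))" for n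
  proof (induction n)
    case 0
    show ?case
      unfolding Bkron_Suc_0
      by (rule unitary_mat_kron[of _ _ 2 1]) (auto simp: unitary_mat_Bmat unitary_mat_one)
  next
    case (Suc n)
    show ?case
      unfolding Bkron_Suc_Suc using Suc Bkron_Suc_carrier[of \<alpha> n]
      by (intro unitary_mat_kron[of _ _ 2 "2 ^ Suc n"]) (auto simp: unitary_mat_Bmat)
  qed
  then show "0 < k \<Longrightarrow> unitary_mat (Bkron \<alpha> k)"
    using gr0_implies_Suc by blast
qed

lemma geometric_sum_double:
  fixes x :: "'a :: comm_semiring_1"
  shows "(\<Sum>s<2 * n. x ^ s) = (\<Sum>s<n. x ^ s) * (1 + x ^ n)"
proof -
  have "(\<Sum>s<2 * n. x ^ s) = (\<Sum>s<n. x ^ s) + (\<Sum>s<n. x ^ (n + s))"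
    using sum_mult_interval_nat[of "\<lambda>s. x ^ s" 2 n] by (simp add: atLeast0LessThan numeral_2_eq_2)
  also have "(\<Sum>s<n. x ^ (n + s)) = x ^ n * (\<Sum>s<n. x ^ s)"
    by (simp add: power_add sum_distrib_left)
  finally show ?thesis
    by (simp add: algebra_simps)
qed

lemma Bkron_first_row:
  "j < 2 ^ Suc n \<Longrightarrow>
   Bkron \<alpha> (Suc n) $$ (0, j) = complex_of_real (1 / sqrt (2 * (\<Sum>s<2 ^ n. cmod \<alpha> ^ (2 * s)))) * \<alpha> ^ (j div 2)"
proof (induction n arbitrary: j)
  case 0
  then show ?case
    by (auto simp: Bkron_Suc_0 Bmat_first_row less_2_cases_iff)
next
  case (Suc n)
  define M :: nat where "M = 2 ^ Suc n"
  define S where "S = (\<Sum>s<2 ^ n. cmod \<alpha> ^ (2 * s))"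
  have j: "j < 2 * M" and M: "M > 0"
    using Suc.prems by (auto simp: M_def)
  then have "j div M < 2" "j mod M < 2 ^ Suc n"
    by (auto simp: M_def less_mult_imp_div_less mult.commute)
  then have "Bkron \<alpha> (Suc (Suc n)) $$ (0, j) =
      complex_of_real (1 / sqrt (1 + cmod \<alpha> ^ (2 * 2 ^ n)) * (1 / sqrt (2 * S))) *
      \<alpha> ^ (2 ^ n * (j div M) + j mod M div 2)"
    using j M Bkron_Suc_carrier[of \<alpha> n] Suc.IH
    by (simp add: Bkron_Suc_Suc Bmat_first_row M_def S_def power_add)
  also have "2 ^ n * (j div M) + j mod M div 2 = j div 2"
  proof -
    have "j = 2 * (2 ^ n * (j div M)) + j mod M"
      using div_mult_mod_eq[of j M] by (simp add: M_def mult_ac)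
    then show ?thesis
      by (metis div_mult_self4 zero_neq_numeral)
  qed
  also have "1 / sqrt (1 + cmod \<alpha> ^ (2 * 2 ^ n)) * (1 / sqrt (2 * S)) =
      1 / sqrt (2 * (S * (1 + cmod \<alpha> ^ (2 * 2 ^ n))))"
    by (simp add: real_sqrt_mult)
  also have "S * (1 + cmod \<alpha> ^ (2 * 2 ^ n)) = (\<Sum>s<2 ^ Suc n. cmod \<alpha> ^ (2 * s))"
    using geometric_sum_double[of "cmod \<alpha> ^ 2" "2 ^ n"] by (simp add: S_def power_mult)
  finally show ?case .
qed

lemma sqrt_div_sqrt_kappa:
  "m > 0 \<Longrightarrow> sqrt (real m) * (1 / sqrt (kappa \<alpha> m)) = 1 / sqrt (2 * (\<Sum>t<m div 2. cmod \<alpha> ^ (2 * t)))"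
  by (simp add: kappa_def real_sqrt_mult)

lemma Psi_dim [simp]: "dim_vec (Psi \<alpha> m) = m"
  by (simp add: Psi_def)

lemma Psi_index:
  "c < m \<Longrightarrow> Psi \<alpha> m $ c = complex_of_real (1 / sqrt (kappa \<alpha> m)) * \<alpha> ^ (Jidx m c div 2)"
  by (simp add: Psi_def Jidx_div_2)

lemma row_mult_mat_of_row:
  assumes "A \<in> carrier_mat r n" "B \<in> carrier_mat n p" "i < r"
  shows "row (A * B) i = row (mat_of_row (row A i) * B) 0"
  using assms by (simp add: row_mult[of _ 1 n])

lemma Jmat_conj_Bkron_first_row:
  assumes "0 < k"
  shows "row (adj (Jmat (2 ^ k)) * Bkron \<alpha> k * Jmat (2 ^ k)) 0 =
    complex_of_real (sqrt (real (2 ^ k))) \<cdot>\<^sub>v Psi \<alpha> (2 ^ k)"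
proof -
  obtain n where k: "k = Suc n"
    using assms gr0_implies_Suc by blast
  define m :: nat where "m = 2 ^ k"
  have m: "even m" "m > 0" "m div 2 = 2 ^ n" "2 ^ Suc n = m"
    by (simp_all add: m_def k)
  have B: "Bkron \<alpha> k \<in> carrier_mat m m"
    using Bkron_carrier[OF assms] by (simp add: m_def)
  show ?thesis
    unfolding m_def[symmetric]
  proof (rule eq_vecI)
    fix c
    assume "c < dim_vec (complex_of_real (sqrt (real m)) \<cdot>\<^sub>v Psi \<alpha> m)"
    then have c: "c < m"
      by simp
    have "(adj (Jmat m) * Bkron \<alpha> k * Jmat m) $$ (0, c) = Bkron \<alpha> k $$ (Jidx m 0, Jidx m c)"
      unfolding Jmat_eq_perm_mat using Jidx_less[OF m(1)] B c m(2) by (intro perm_mat_conj_index) auto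
    also have "\<dots> = complex_of_real (1 / sqrt (2 * (\<Sum>s<m div 2. cmod \<alpha> ^ (2 * s)))) * \<alpha> ^ (Jidx m c div 2)"
      using Bkron_first_row[of "Jidx m c" n \<alpha>, unfolded m(4) m(3)[symmetric]] Jidx_less[OF m(1) c] m(3)
      by (simp add: k Jidx_def)
    also have "\<dots> = complex_of_real (sqrt (real m) * (1 / sqrt (kappa \<alpha> m))) * \<alpha> ^ (Jidx m c div 2)"
      by (simp only: sqrt_div_sqrt_kappa[OF m(2)])
    also have "\<dots> = (complex_of_real (sqrt (real m)) \<cdot>\<^sub>v Psi \<alpha> m) $ c"
      using c by (simp add: Psi_index)
    finally show "row (adj (Jmat m) * Bkron \<alpha> k * Jmat m) 0 $ c = (complex_of_real (sqrt (real m)) \<cdot>\<^sub>v Psi \<alpha> m) $ c"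
      using B c m(2) by (simp add: Jmat_eq_perm_mat)
  qed (use B in \<open>simp add: Jmat_eq_perm_mat\<close>)
qed

(* The hypothesis k >= 2 is only used as k > 0. *)
theorem mainTheorem6:
  fixes k :: nat and \<alpha> :: complex
  assumes "k \<ge> 2"
  shows "unitary_mat (Amat \<alpha> k) \<and>
    row (Amat \<alpha> k) 0 =
      row (mat_of_row (complex_of_real (sqrt (real (2^k))) \<cdot>\<^sub>v Psi \<alpha> (2^k)) * adj (fourier (2^k))) 0"
proof -
  have k: "0 < k"
    using assms by simp
  define P where "P = adj (Jmat (2 ^ k)) * Bkron \<alpha> k * Jmat (2 ^ k)"
  have P: "P \<in> carrier_mat (2 ^ k) (2 ^ k)"
    unfolding P_def Jmat_eq_perm_mat using Bkron_carrier[OF k]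
    by (intro mult_carrier_mat adj_carrier_mat) auto
  have "Jidx (2 ^ k) ` {..<2 ^ k} \<subseteq> {..<2 ^ k}"
    using Jidx_less[of "2 ^ k"] k by auto
  then have "unitary_mat P"
    unfolding P_def Jmat_eq_perm_mat
    using unitary_mat_perm_mat[OF _ inj_on_Jidx] unitary_mat_Bkron[OF k] Bkron_carrier[OF k]
    by (intro unitary_mat_mult[of _ _ "2 ^ k"] unitary_mat_adj) (auto intro!: mult_carrier_mat adj_carrier_mat)
  then have "unitary_mat (Amat \<alpha> k)"
    unfolding Amat_def P_def[symmetric] using P unitary_mat_fourier[of "2 ^ k"]
    by (intro unitary_mat_mult[of _ _ "2 ^ k"] unitary_mat_adj) (auto simp: adj_carrier_mat)
  moreover have "row (Amat \<alpha> k) 0 = row (mat_of_row (row P 0) * adj (fourier (2 ^ k))) 0"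
    unfolding Amat_def P_def[symmetric] using P by (intro row_mult_mat_of_row) (auto simp: adj_carrier_mat)
  ultimately show ?thesis
    using Jmat_conj_Bkron_first_row[OF k] by (simp add: P_def)
qed

end
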